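(* Let $n\ge1$ and let $w_{12},w_{13},w_{23}$ be real numbers. For the minimal algorithm transferring $n$ disks from Peg 1 to Peg 3, played alternately by Anh (odd-numbered moves) and Bao (even-numbered moves), the total score is $\Delta_{13}(n)=w_{13}$ if $n$ is odd, and $\Delta_{13}(n)=w_{12}+w_{23}-w_{13}$ if $n$ is even.
   Context: Tower of Hanoi on three pegs (labeled 1, 2, 3) with disks $1<2<\dots<n$ ordered by size; a legal move transfers the top disk of one peg to a different peg that is empty or has a larger top disk. A move between Peg $i$ and Peg $j$ (either direction) is a move along edge $\{i,j\}$ and earns the mover the real weight $w_{ij}=w_{ji}$. The minimal algorithm $\mathcal{M}(n;i\to j)$ ($i\ne j$, $k$ the third peg) is defined recursively: $\mathcal{M}(1;i\to j)$ is the single move of disk 1 from $i$ to $j$; for $n\ge2$, $\mathcal{M}(n;i\to j)$ is $\mathcal{M}(n-1;i\to k)$, then the move of disk $n$ from $i$ to $j$, then $\mathcal{M}(n-1;k\to j)$; it has $2^n-1$ moves. When a move sequence is played in the two-player game, Anh makes moves $1,3,5,\dots$ and Bao makes moves $2,4,\dots$; $A_{ij}(n)$ and $B_{ij}(n)$ are the total points of Anh and Bao for $\mathcal{M}(n;i\to j)$, and $\Delta_{ij}(n)=A_{ij}(n)-B_{ij}(n)$. *)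

theory Defs
  imports Main "HOL.Real"
begin

text \<open>Pegs are 1, 2, 3. A move is a pair (source, target). The third peg of
  distinct pegs i, j in {1,2,3} is 6 - i - j.\<close>

definition third_peg :: "nat \<Rightarrow> nat \<Rightarrow> nat" where
  "third_peg i j = 6 - i - j"

text \<open>The minimal algorithm M(n; i -> j) as its list of moves (only the pegs of
  each move matter for scoring). hanoi 0 is empty, so hanoi 1 i j = [(i,j)].\<close>

fun hanoi :: "nat \<Rightarrow> nat \<Rightarrow> nat \<Rightarrow> (nat \<times> nat) list" where
  "hanoi 0 i j = []"
| "hanoi (Suc n) i j =
     hanoi n i (third_peg i j) @ [(i, j)] @ hanoi n (third_peg i j) j"

definition edge_weight :: "real \<Rightarrow> real \<Rightarrow> real \<Rightarrow> nat \<times> nat \<Rightarrow> real" where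
  "edge_weight w12 w13 w23 m =
     (if fst m \<in> {1,2} \<and> snd m \<in> {1,2} then w12
      else if fst m \<in> {1,3} \<and> snd m \<in> {1,3} then w13
      else w23)"

text \<open>Anh makes moves 1,3,5,... (0-based indices 0,2,4,...); Bao makes moves 2,4,...\<close>

definition anh_score :: "real \<Rightarrow> real \<Rightarrow> real \<Rightarrow> (nat \<times> nat) list \<Rightarrow> real" where
  "anh_score w12 w13 w23 ms =
     (\<Sum>k\<in>{k. k < length ms \<and> even k}. edge_weight w12 w13 w23 (ms ! k))"

definition bao_score :: "real \<Rightarrow> real \<Rightarrow> real \<Rightarrow> (nat \<times> nat) list \<Rightarrow> real" where
  "bao_score w12 w13 w23 ms =
     (\<Sum>k\<in>{k. k < length ms \<and> odd k}. edge_weight w12 w13 w23 (ms ! k))"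

definition Delta :: "real \<Rightarrow> real \<Rightarrow> real \<Rightarrow> nat \<Rightarrow> nat \<Rightarrow> nat \<Rightarrow> real" where
  "Delta w12 w13 w23 i j n =
     anh_score w12 w13 w23 (hanoi n i j) - bao_score w12 w13 w23 (hanoi n i j)"

end

theory Submission
  imports Defs
begin

(* Anh's score minus Bao's score is the alternating sum of the move weights. For n >= 1
   the minimal algorithm has odd length 2^n - 1, so in
   M(n+1; i->j) = M(n; i->k), (i,j), M(n; k->j) the middle move goes to Bao and the last
   block starts with Anh again: Delta_ij(n+1) = Delta_ik(n) - w_ij + Delta_kj(n).
   Induction from Delta_ij(1) = w_ij then alternates between w_ij and w_ik + w_kj - w_ij. *)

fun alternating_sum :: "('a \<Rightarrow> 'b::ring_1) \<Rightarrow> 'a list \<Rightarrow> 'b" where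
  "alternating_sum W [] = 0"
| "alternating_sum W (x # xs) = W x - alternating_sum W xs"

lemma alternating_sum_append:
  "alternating_sum W (xs @ ys) = alternating_sum W xs + (-1) ^ length xs * alternating_sum W ys"
  by (induction xs) auto

lemma alternating_sum_conv_sum:
  "alternating_sum W xs = (\<Sum>k<length xs. (-1) ^ k * W (xs ! k))"
proof (induction xs)
  case Nil
  then show ?case by simp
next
  case (Cons x xs)
  have "(\<Sum>k<length (x # xs). (-1) ^ k * W ((x # xs) ! k))
        = W x + (\<Sum>k<length xs. (-1) ^ Suc k * W (xs ! k))"
    by (simp add: sum.lessThan_Suc_shift del: sum.lessThan_Suc)
  also have "\<dots> = W x - (\<Sum>k<length xs. (-1) ^ k * W (xs ! k))"
    by (simp add: sum_negf)
  finally show ?case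
    using Cons by simp
qed

lemma sum_even_minus_sum_odd:
  fixes f :: "nat \<Rightarrow> 'a::ring_1"
  shows "(\<Sum>k\<in>{k. k < m \<and> even k}. f k) - (\<Sum>k\<in>{k. k < m \<and> odd k}. f k)
         = (\<Sum>k<m. (-1) ^ k * f k)"
proof -
  have "(\<Sum>k<m. (-1) ^ k * f k) = (\<Sum>k<m. if even k then f k else - f k)"
    by (rule sum.cong) auto
  also have "\<dots> = (\<Sum>k\<in>{..<m} \<inter> {k. even k}. f k) + (\<Sum>k\<in>{..<m} \<inter> - {k. even k}. - f k)"
    by (simp only: sum.If_cases finite_lessThan)
  also have "{..<m} \<inter> {k. even k} = {k. k < m \<and> even k}"
    by auto
  also have "{..<m} \<inter> - {k. even k} = {k. k < m \<and> odd k}"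
    by auto
  finally show ?thesis
    by (simp add: sum_negf)
qed

lemma Delta_eq_alternating_sum:
  "Delta w12 w13 w23 i j n = alternating_sum (edge_weight w12 w13 w23) (hanoi n i j)"
  unfolding Delta_def anh_score_def bao_score_def alternating_sum_conv_sum sum_even_minus_sum_odd ..

lemma edge_weight_sym: "edge_weight w12 w13 w23 (a, b) = edge_weight w12 w13 w23 (b, a)"
  by (auto simp: edge_weight_def)

lemma length_hanoi: "length (hanoi n i j) = 2 ^ n - 1"
proof (induction n arbitrary: i j)
  case 0
  then show ?case by simp
next
  case (Suc n)
  have "(1::nat) \<le> 2 ^ n"
    by simp
  then show ?case
    using Suc by (simp add: algebra_simps)
qed

lemma odd_length_hanoi: "n \<ge> 1 \<Longrightarrow> odd (length (hanoi n i j))"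
  by (simp add: length_hanoi)

lemma third_peg_pegs:
  assumes "i \<in> {1,2,3}" "j \<in> {1,2,3}" "i \<noteq> j"
  shows "third_peg i j \<in> {1,2,3}" "third_peg i j \<noteq> i" "third_peg i j \<noteq> j"
    and "third_peg i (third_peg i j) = j" "third_peg (third_peg i j) j = i"
  using assms unfolding third_peg_def by auto

lemma alternating_sum_hanoi:
  fixes W :: "nat \<times> nat \<Rightarrow> 'a::comm_ring_1"
  assumes sym: "\<And>a b. W (a, b) = W (b, a)"
    and "n \<ge> 1" "i \<in> {1,2,3}" "j \<in> {1,2,3}" "i \<noteq> j"
  shows "alternating_sum W (hanoi n i j) =
    (if odd n then W (i, j) else W (i, third_peg i j) + W (third_peg i j, j) - W (i, j))"
  using assms(2-)
proof (induction n arbitrary: i j rule: nat_induct_at_least)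
  case base
  then show ?case by simp
next
  case (Suc n)
  define k where "k = third_peg i j"
  note k = third_peg_pegs[OF Suc.prems, folded k_def]
  have "alternating_sum W (hanoi (Suc n) i j)
        = alternating_sum W (hanoi n i k) - W (i, j) + alternating_sum W (hanoi n k j)"
    using odd_length_hanoi[OF Suc.hyps, of i k] by (simp add: alternating_sum_append k_def)
  then show ?case
    using Suc.IH[of i k] Suc.IH[of k j] Suc.prems k sym[of k i] sym[of j k] sym[of k j]
    by (auto simp: k_def[symmetric])
qed

theorem lemma1:
  fixes w12 w13 w23 :: real and n :: nat
  assumes "n \<ge> 1"
  shows "Delta w12 w13 w23 1 3 n = (if odd n then w13 else w12 + w23 - w13)"
  using alternating_sum_hanoi[of "edge_weight w12 w13 w23", OF edge_weight_sym assms, of 1 3]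
  by (simp add: Delta_eq_alternating_sum edge_weight_def third_peg_def)

end
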